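(* Let $n\ge1$, $\alpha\in(0,1)$, $\mu\in(0,1]$, $T>0$, $\tau>0$, let $A,B$ be constant real $n\times n$ matrices, let $\phi:[-\tau,0]\to\mathbb{R}^n$ be continuous, and let $f:[0,T]\times\mathbb{R}^n\times\mathbb{R}^n\to\mathbb{R}^n$ be continuous with $f(t,0,0)=0$. Consider $$ \begin{cases} {}^C\!D_{0}^{\alpha,\mu}y(t)=\exp\!\left(\frac{\mu-1}{\mu}t\right)\left[Ay(t)+By(t-\tau)+f(t,y(t),y(t-\tau))\right], & t\in[0,T],\\ y(t)=\phi(t), & t\in[-\tau,0]. \end{cases} $$ Assume there is $L_f>0$ such that for all functions $y,z:[-\tau,T]\to\mathbb{R}^n$ and all $t\in[0,T]$, $\|f(t,y(t),y(t-\tau))-f(t,z(t),z(t-\tau))\|\le L_f\big(\|y(t)-z(t)\|+\|y(t-\tau)-z(t-\tau)\|\big)$. Set $k=1+\alpha$, $r=1+\frac{1}{\alpha}$, $\omega=\left(\frac{\Gamma(\alpha^2)}{k^{\alpha^2}}\right)^{1/k}$, $$ \psi=\frac{3^{1/\alpha}\big((\|A\|+L_f)^r+(\|B\|+L_f)^r e^{-r\tau}\big)\omega^r}{\mu^{k}\Gamma^r(\alpha)},\qquad \varphi=\frac{3^{1/\alpha}(\|B\|+L_f)^r\big(1-e^{-r\tau}\big)}{r\,\mu^{k}\Gamma^r(\alpha)}\,\omega^r . $$ Let $c_1,c_2$ be positive numbers with $c_1\le c_2$. If $$ \left(\frac{3^{1/\alpha}r+\big(3^{1/\alpha}\psi+r\varphi+\psi\varphi\big)e^{(\psi+r)t}}{r+\psi}\right)^{1/r}\le\frac{c_2}{c_1}\quad\text{for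 all } t\in[0,T], $$ then the system is finite time stable with respect to $\{c_1,c_2,T\}$, i.e. $\|\phi\|_C\le c_1$ implies $\|y(t)\|<c_2$ for all $t\in[0,T]$, where $y$ is the (unique mild) solution.
   Context: $\|\cdot\|$ denotes the Euclidean norm of a vector and the spectral norm of a matrix; $\|\phi\|_C=\sup_{t\in[-\tau,0]}\|\phi(t)\|$. $\Gamma$ is Euler's Gamma function. For $\alpha>0$, $\mu\in(0,1]$, the generalized proportional fractional integral is ${}^C\!I_{0}^{\alpha,\mu}h(t)=\frac{1}{\mu^{\alpha}\Gamma(\alpha)}\int_0^t \exp\!\left(\frac{\mu-1}{\mu}(t-s)\right)(t-s)^{\alpha-1}h(s)\,ds$, and for $\alpha\in(0,1)$ the Caputo generalized proportional fractional derivative is ${}^C\!D_{0}^{\alpha,\mu}h(t)=\frac{1}{\mu^{1-\alpha}\Gamma(1-\alpha)}\int_0^t \exp\!\left(\frac{\mu-1}{\mu}(t-s)\right)(t-s)^{-\alpha}\big((1-\mu)h(s)+\mu h'(s)\big)\,ds$ (applied componentwise to vector functions). A (mild) solution is a function $y:[-\tau,T]\to\mathbb{R}^n$ with $y=\phi$ on $[-\tau,0]$ and, for $t\in[0,T]$, $y(t)=\phi(0)\exp\!\left(\frac{\mu-1}{\mu}t\right)+{}^C\!I_{0}^{\alpha,\mu}\Big[\exp\!\left(\frac{\mu-1}{\mu}s\right)\big(Ay(s)+By(s-\tau)+f(s,y(s),y(s-\tau))\big)\Big](t)$; under the Lipschitz condition such a solution exists and is unique. *)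

theory Defs
  imports "HOL-Analysis.Analysis"
begin

definition gpf_integral :: "real \<Rightarrow> real \<Rightarrow> (real \<Rightarrow> real^'n) \<Rightarrow> real \<Rightarrow> real^'n" where
  "gpf_integral \<alpha> \<mu> h t =
     (1 / (\<mu> powr \<alpha> * Gamma \<alpha>)) *\<^sub>R
       integral {0..t} (\<lambda>s. (exp ((\<mu> - 1) / \<mu> * (t - s)) * (t - s) powr (\<alpha> - 1)) *\<^sub>R h s)"

definition spec_norm :: "real^'n^'n \<Rightarrow> real" where
  "spec_norm M = onorm (\<lambda>x. M *v x)"

definition normC :: "real \<Rightarrow> (real \<Rightarrow> real^'n) \<Rightarrow> real" where
  "normC \<tau> \<phi> = (SUP t\<in>{-\<tau>..0}. norm (\<phi> t))"

definition mild_solution ::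
  "real \<Rightarrow> real \<Rightarrow> real \<Rightarrow> real \<Rightarrow> real^'n^'n \<Rightarrow> real^'n^'n \<Rightarrow>
   (real \<Rightarrow> real^'n \<Rightarrow> real^'n \<Rightarrow> real^'n) \<Rightarrow> (real \<Rightarrow> real^'n) \<Rightarrow> (real \<Rightarrow> real^'n) \<Rightarrow> bool" where
  "mild_solution \<alpha> \<mu> T \<tau> A B f \<phi> y \<longleftrightarrow>
     continuous_on {-\<tau>..T} y \<and>
     (\<forall>t\<in>{-\<tau>..0}. y t = \<phi> t) \<and>
     (\<forall>t\<in>{0..T}. y t = exp ((\<mu> - 1) / \<mu> * t) *\<^sub>R \<phi> 0 +
        gpf_integral \<alpha> \<mu>
          (\<lambda>s. exp ((\<mu> - 1) / \<mu> * s) *\<^sub>R (A *v y s + B *v y (s - \<tau>) + f s (y s) (y (s - \<tau>)))) t)"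

end

theory Submission
  imports Defs
begin

text \<open>
  Let \<open>w t = norm (y t)\<close>, \<open>K = 1 / (\<mu> powr \<alpha> * Gamma \<alpha>)\<close>, \<open>a = spec_norm A + Lf\<close> and
  \<open>b = spec_norm B + Lf\<close>. The mild-solution formula and the Lipschitz bound give the delayed
  fractional integral inequality
  \<open>w t \<le> c1 + K * \<integral>\<^sub>0\<^sup>t (t - s) powr (\<alpha> - 1) * (a * w s + b * w (s - \<tau>)) ds\<close>.
  Hoelder's inequality with the exponents \<open>1 + \<alpha>\<close> and \<open>r = 1 + 1 / \<alpha>\<close> bounds each kernel
  integral by \<open>e\<^sup>t \<omega> (\<integral>\<^sub>0\<^sup>t e\<^bsup>-r s\<^esup> h(s)\<^sup>r ds)\<^bsup>1/r\<^esup>\<close>, and the power mean inequality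
  \<open>(x + y + z)\<^sup>r \<le> 3\<^bsup>r - 1\<^esup> (x\<^sup>r + y\<^sup>r + z\<^sup>r)\<close> turns this into a linear integral inequality
  for \<open>w\<^sup>r\<close>. The function \<open>V\<close> whose \<open>r\<close>-th power solves the corresponding integral equation
  is \<open>c1\<close> times the left-hand side of the hypothesis on \<open>c2 / c1\<close>, and a first-crossing
  argument shows \<open>w < V \<le> c2\<close> on \<open>[0, T]\<close>.
\<close>

lemma integral_mult_le_by_Young:
  fixes f g :: "'a::euclidean_space \<Rightarrow> real"
  assumes pq: "p > 1" "q > 1" "1/p + 1/q = 1"
    and nonneg: "\<And>x. x \<in> S \<Longrightarrow> 0 \<le> f x" "\<And>x. x \<in> S \<Longrightarrow> 0 \<le> g x"
    and fp: "(\<lambda>x. f x powr p) integrable_on S" and gq: "(\<lambda>x. g x powr q) integrable_on S"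
    and fg: "(\<lambda>x. f x * g x) integrable_on S"
    and AB: "0 < A" "0 < B" "integral S (\<lambda>x. f x powr p) \<le> A powr p" "integral S (\<lambda>x. g x powr q) \<le> B powr q"
  shows "integral S (\<lambda>x. f x * g x) \<le> A * B"
proof -
  have "integral S (\<lambda>x. f x * g x) / (A * B) = integral S (\<lambda>x. (f x / A) * (g x / B))"
    by (simp add: field_simps)
  also have "\<dots> \<le> integral S (\<lambda>x. f x powr p / (p * A powr p) + g x powr q / (q * B powr q))"
  proof (rule integral_le)
    show "(\<lambda>x. f x / A * (g x / B)) integrable_on S"
      using integrable_on_mult_right[OF fg, of "1 / (A * B)"] by (simp add: field_simps)
    show "(\<lambda>x. f x powr p / (p * A powr p) + g x powr q / (q * B powr q)) integrable_on S"
      using fp gq by (intro integrable_add integrable_on_divide)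
  next
    fix x assume "x \<in> S"
    then have "f x / A * (g x / B) \<le> (f x / A) powr p / p + (g x / B) powr q / q"
      using pq AB nonneg by (intro Youngs_inequality) auto
    then show "f x / A * (g x / B) \<le> f x powr p / (p * A powr p) + g x powr q / (q * B powr q)"
      using AB nonneg \<open>x \<in> S\<close> by (simp add: powr_divide mult.commute)
  qed
  also have "\<dots> = integral S (\<lambda>x. f x powr p) / (p * A powr p) + integral S (\<lambda>x. g x powr q) / (q * B powr q)"
    using fp gq by (simp add: integral_add integrable_on_divide)
  also have "\<dots> \<le> 1/p + 1/q"
    using AB pq(1,2) by (intro add_mono) (simp_all add: divide_simps)
  finally show ?thesis
    using AB pq by (simp add: pos_divide_le_eq)
qed

lemma Holder_inequality_integral:
  fixes f g :: "'a::euclidean_space \<Rightarrow> real"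
  assumes pq: "p > 1" "q > 1" "1/p + 1/q = 1"
    and nonneg: "\<And>x. x \<in> S \<Longrightarrow> 0 \<le> f x" "\<And>x. x \<in> S \<Longrightarrow> 0 \<le> g x"
    and fp: "(\<lambda>x. f x powr p) integrable_on S" and gq: "(\<lambda>x. g x powr q) integrable_on S"
    and fg: "(\<lambda>x. f x * g x) integrable_on S"
  shows "integral S (\<lambda>x. f x * g x)
           \<le> integral S (\<lambda>x. f x powr p) powr (1/p) * integral S (\<lambda>x. g x powr q) powr (1/q)"
proof -
  define F G where "F = integral S (\<lambda>x. f x powr p)" and "G = integral S (\<lambda>x. g x powr q)"
  have "F \<ge> 0" "G \<ge> 0"
    unfolding F_def G_def by (auto intro: integral_nonneg fp gq nonneg)
  \<comment> \<open>The norms are enlarged by \<open>e > 0\<close> because they may vanish.\<close>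
  have approx: "integral S (\<lambda>x. f x * g x) \<le> (F + e) powr (1/p) * (G + e) powr (1/q)" if "e > 0" for e
    using pq nonneg fp gq fg \<open>F \<ge> 0\<close> \<open>G \<ge> 0\<close> that
    by (intro integral_mult_le_by_Young) (auto simp: F_def G_def powr_powr)
  have shift: "((\<lambda>e. x + e) \<longlongrightarrow> x) (at_right 0)" for x :: real
    using tendsto_add[OF tendsto_const[of x] tendsto_ident_at[of 0 "{0<..}"]] by simp
  have "((\<lambda>e. (F + e) powr (1/p) * (G + e) powr (1/q)) \<longlongrightarrow> F powr (1/p) * G powr (1/q)) (at_right 0)"
    using \<open>F \<ge> 0\<close> \<open>G \<ge> 0\<close> pq
    by (intro tendsto_intros tendsto_powr' shift) (auto intro: eventually_at_rightI[of 0 1])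
  moreover have "\<forall>\<^sub>F e in at_right 0. integral S (\<lambda>x. f x * g x) \<le> (F + e) powr (1/p) * (G + e) powr (1/q)"
    using eventually_at_right_less by (rule eventually_mono) (rule approx)
  ultimately show ?thesis
    unfolding F_def G_def by (rule tendsto_lowerbound) simp
qed

lemma powr_add3_le:
  fixes x y z p :: real
  assumes "x > 0" "y > 0" "z > 0" "p \<ge> 1"
  shows "(x + y + z) powr p \<le> 3 powr (p - 1) * (x powr p + y powr p + z powr p)"
proof -
  have convex: "convex_on {0<..} (\<lambda>x::real. x powr p)"
    using assms(4) by (rule powr_convex)
  have mid: "((y + z) / 2) powr p \<le> (y powr p + z powr p) / 2"
    using convex_onD[OF convex, of "1/2" y z] assms by (simp add: field_simps)
  have "((x + y + z) / 3) powr p = ((1 - 2/3) * x + 2/3 * ((y + z) / 2)) powr p"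
    by (rule arg_cong[where f = "\<lambda>u. u powr p"]) simp
  also have "\<dots> \<le> (1 - 2/3) * x powr p + 2/3 * ((y + z) / 2) powr p"
    using convex_onD[OF convex, of "2/3" x "(y + z) / 2"] assms by simp
  also have "\<dots> \<le> (x powr p + y powr p + z powr p) / 3"
    using mid by simp
  finally have "((x + y + z) / 3) powr p \<le> (x powr p + y powr p + z powr p) / 3" .
  then have "3 powr p * ((x + y + z) / 3) powr p \<le> 3 powr p * ((x powr p + y powr p + z powr p) / 3)"
    by simp
  then show ?thesis
    using assms by (simp add: powr_divide powr_diff)
qed

lemma has_integral_exp_mult:
  fixes c a b :: real
  assumes "c \<noteq> 0" "a \<le> b"
  shows "((\<lambda>s. exp (c * s)) has_integral (exp (c * b) - exp (c * a)) / c) {a..b}"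
proof -
  have "((\<lambda>s. exp (c * s) / c) has_real_derivative exp (c * s)) (at s within {a..b})" for s
    using assms(1) by (auto intro!: derivative_eq_intros)
  then have "((\<lambda>s. exp (c * s)) has_integral exp (c * b) / c - exp (c * a) / c) {a..b}"
    using assms(2) by (intro fundamental_theorem_of_calculus)
      (auto simp: has_real_derivative_iff_has_vector_derivative)
  then show ?thesis
    by (simp add: diff_divide_distrib)
qed

lemma less_by_first_crossing:
  fixes u v :: "real \<Rightarrow> real"
  assumes cont: "continuous_on {a..b} u" "continuous_on {a..b} v"
    and step: "\<And>t. t \<in> {a..b} \<Longrightarrow> (\<And>s. s \<in> {a..<t} \<Longrightarrow> u s < v s) \<Longrightarrow> u t < v t"
    and t: "t \<in> {a..b}"
  shows "u t < v t"
proof (rule ccontr)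
  define S where "S = {s \<in> {a..b}. v s \<le> u s}"
  assume "\<not> u t < v t"
  then have "t \<in> S"
    using t by (simp add: S_def)
  moreover have "closed S"
    unfolding S_def using cont by (intro continuous_on_closed_Collect_le) auto
  moreover have "bdd_below S"
    by (auto simp: S_def bdd_below_def)
  ultimately have "Inf S \<in> S"
    by (intro closed_contains_Inf) auto
  moreover have "u s < v s" if "s \<in> {a..<Inf S}" for s
  proof (rule ccontr)
    assume "\<not> u s < v s"
    then have "s \<in> S"
      using that \<open>Inf S \<in> S\<close> by (auto simp: S_def)
    then show False
      using that \<open>bdd_below S\<close> cInf_lower[of s S] by auto
  qed
  ultimately show False
    using step[of "Inf S"] by (auto simp: S_def)
qed

section \<open>The kernel \<open>(t - s) powr (\<alpha> - 1)\<close>\<close>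

lemma has_integral_powr_kernel:
  fixes t \<beta> :: real
  assumes "\<beta> > -1" "t \<ge> 0"
  shows "((\<lambda>s. (t - s) powr \<beta>) has_integral t powr (\<beta> + 1) / (\<beta> + 1)) {0..t}"
proof -
  have "((\<lambda>x. x powr \<beta>) has_integral t powr (\<beta> + 1) / (\<beta> + 1)) (cbox 0 t)"
    using has_integral_powr_from_0[OF assms] by simp
  from has_integral_affinity[OF this, of "-1" t]
  have "((\<lambda>x. (- x + t) powr \<beta>) has_integral t powr (\<beta> + 1) / (\<beta> + 1)) ((\<lambda>x. - x + t) ` {0..t})"
    by simp
  moreover have "(\<lambda>x. - x + t) ` {0..t} = {0..t}"
    using image_affinity_atLeastAtMost[of "-1" t 0 t] assms by simp
  ultimately show ?thesis by simp
qed

lemma powr_kernel_integrable: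
  fixes t \<beta> :: real and h :: "real \<Rightarrow> real"
  assumes "\<beta> > -1" "t \<ge> 0" "continuous_on {0..t} h"
  shows "(\<lambda>s. (t - s) powr \<beta> * h s) integrable_on {0..t}"
proof -
  have "(\<lambda>s. h s * (t - s) powr \<beta>) absolutely_integrable_on {0..t}"
  proof (rule absolutely_integrable_bounded_measurable_product_real)
    show "h \<in> borel_measurable (lebesgue_on {0..t})"
      using assms(3) by (rule continuous_imp_measurable_on_sets_lebesgue) auto
    show "bounded (h ` {0..t})"
      using assms(3) by (intro compact_imp_bounded compact_continuous_image) auto
    show "(\<lambda>s. (t - s) powr \<beta>) absolutely_integrable_on {0..t}"
      using has_integral_powr_kernel[OF assms(1,2)] by (intro nonnegative_absolutely_integrable_1) auto
  qed auto
  then show ?thesis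
    by (simp add: mult.commute absolutely_integrable_on_def)
qed

lemma integral_powr_kernel_exp_eq:
  fixes t \<beta> k :: real
  assumes "\<beta> > 0" "k > 0" "t \<ge> 0"
  shows "integral {0..t} (\<lambda>s. (t - s) powr (\<beta> - 1) * exp (k * s))
           = exp (k * t) / k powr \<beta> * integral {0..k * t} (\<lambda>u. u powr (\<beta> - 1) / exp u)"
proof -
  define g where "g = (\<lambda>u::real. u powr (\<beta> - 1) / exp u)"
  define I where "I = integral {0..k * t} g"
  have "g integrable_on {0..k * t}"
    unfolding g_def using Gamma_integral_real[OF assms(1)]
    by (intro integrable_on_subinterval[of _ "{0..}"]) (auto simp: has_integral_integrable)
  then have "(g has_integral I) (cbox 0 (k * t))"
    unfolding I_def by (simp add: has_integral_integral)
  from has_integral_affinity[OF this, of "-k" "k * t"] assms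
  have "((\<lambda>s. g (- k * s + k * t)) has_integral I / k) ((\<lambda>s. - (1/k) * s + t) ` {0..k * t})"
    by (simp add: field_simps)
  moreover have "(\<lambda>s. - (1/k) * s + t) ` {0..k * t} = {0..t}"
    using image_affinity_atLeastAtMost[of "-(1/k)" t 0 "k * t"] assms by auto
  ultimately have "((\<lambda>s. exp (k * t) / k powr (\<beta> - 1) * g (- k * s + k * t))
                      has_integral exp (k * t) / k powr (\<beta> - 1) * (I / k)) {0..t}"
    by (intro has_integral_mult_right) simp
  moreover have "exp (k * t) / k powr (\<beta> - 1) * g (- k * s + k * t) = (t - s) powr (\<beta> - 1) * exp (k * s)"
    if "s \<in> {0..t}" for s
  proof -
    have "(k * (t - s)) powr (\<beta> - 1) = k powr (\<beta> - 1) * (t - s) powr (\<beta> - 1)"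
      using that assms by (simp add: powr_mult)
    moreover have "exp (k * t) / exp (k * (t - s)) = exp (k * s)"
      by (simp add: algebra_simps flip: exp_diff)
    ultimately show ?thesis
      using assms unfolding g_def by (simp add: field_simps)
  qed
  ultimately have "((\<lambda>s. (t - s) powr (\<beta> - 1) * exp (k * s))
                      has_integral exp (k * t) / k powr (\<beta> - 1) * (I / k)) {0..t}"
    by (rule has_integral_eq[rotated]) auto
  then show ?thesis
    using assms by (simp add: integral_unique powr_diff field_simps I_def g_def)
qed

lemma integral_powr_kernel_exp_le:
  fixes t \<beta> k :: real
  assumes "\<beta> > 0" "k > 0" "t \<ge> 0"
  shows "integral {0..t} (\<lambda>s. (t - s) powr (\<beta> - 1) * exp (k * s)) \<le> exp (k * t) * Gamma \<beta> / k powr \<beta>"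
proof -
  have Gamma: "((\<lambda>u. u powr (\<beta> - 1) / exp u) has_integral Gamma \<beta>) {0..}"
    by (rule Gamma_integral_real[OF assms(1)])
  have "integral {0..k * t} (\<lambda>u. u powr (\<beta> - 1) / exp u) \<le> Gamma \<beta>"
    using integral_subset_le[of "{0..k * t}" "{0..}" "\<lambda>u. u powr (\<beta> - 1) / exp u"] Gamma
      integrable_on_subinterval[OF has_integral_integrable[OF Gamma]]
    by (auto simp: has_integral_integrable_integral)
  then show ?thesis
    unfolding integral_powr_kernel_exp_eq[OF assms] using assms
    by (simp add: divide_right_mono)
qed

locale fractional_order =
  fixes \<alpha> :: real
  assumes alpha_pos: "0 < \<alpha>"
begin

definition r :: real where "r = 1 + 1 / \<alpha>"

definition \<omega> :: real where "\<omega> = (Gamma (\<alpha>\<^sup>2) / (1 + \<alpha>) powr (\<alpha>\<^sup>2)) powr (1 / (1 + \<alpha>))"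

lemma r_gt_one: "r > 1"
  using alpha_pos by (simp add: r_def)

lemma \<omega>_pos: "\<omega> > 0"
proof -
  have "Gamma (\<alpha>\<^sup>2) / (1 + \<alpha>) powr (\<alpha>\<^sup>2) > 0"
    using alpha_pos by (intro divide_pos_pos Gamma_real_pos) auto
  then show ?thesis
    unfolding \<omega>_def by (simp only: powr_gt_zero)
qed

lemma integrable_exp_times_powr_r:
  assumes "continuous_on {a..b} g" "\<And>s. s \<in> {a..b} \<Longrightarrow> 0 \<le> g s"
  shows "(\<lambda>s. exp (- r * s) * g s powr r) integrable_on {a..b}"
  using assms r_gt_one by (intro integrable_continuous_interval continuous_intros continuous_on_powr') auto

lemma kernel_factor_powr_integral_le:
  assumes t: "0 \<le> t"
  shows "(\<lambda>s. ((t - s) powr (\<alpha> - 1) * exp s) powr (1 + \<alpha>)) integrable_on {0..t}"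
    and "integral {0..t} (\<lambda>s. ((t - s) powr (\<alpha> - 1) * exp s) powr (1 + \<alpha>)) powr (1 / (1 + \<alpha>))
           \<le> exp t * \<omega>"
proof -
  define k where "k = 1 + \<alpha>"
  have k: "k > 1"
    using alpha_pos by (simp add: k_def)
  have eq: "((t - s) powr (\<alpha> - 1) * exp s) powr k = (t - s) powr (\<alpha>\<^sup>2 - 1) * exp (k * s)" for s
  proof -
    have "((t - s) powr (\<alpha> - 1) * exp s) powr k = (t - s) powr ((\<alpha> - 1) * k) * exp (k * s)"
      by (simp add: powr_mult powr_powr exp_powr_real mult.commute)
    also have "(\<alpha> - 1) * k = \<alpha>\<^sup>2 - 1"
      unfolding k_def by (simp add: algebra_simps power2_eq_square)
    finally show ?thesis .
  qed
  show "(\<lambda>s. ((t - s) powr (\<alpha> - 1) * exp s) powr (1 + \<alpha>)) integrable_on {0..t}"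
    unfolding k_def[symmetric] eq using alpha_pos t by (intro powr_kernel_integrable continuous_intros) auto
  then have "0 \<le> integral {0..t} (\<lambda>s. ((t - s) powr (\<alpha> - 1) * exp s) powr k)"
    unfolding k_def by (rule integral_nonneg) simp
  moreover have "integral {0..t} (\<lambda>s. ((t - s) powr (\<alpha> - 1) * exp s) powr k)
                   \<le> exp (k * t) * (Gamma (\<alpha>\<^sup>2) / k powr (\<alpha>\<^sup>2))"
    unfolding eq using integral_powr_kernel_exp_le[of "\<alpha>\<^sup>2" k t] alpha_pos k t by simp
  ultimately have "integral {0..t} (\<lambda>s. ((t - s) powr (\<alpha> - 1) * exp s) powr k) powr (1 / k)
                     \<le> (exp (k * t) * (Gamma (\<alpha>\<^sup>2) / k powr (\<alpha>\<^sup>2))) powr (1 / k)"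
    using k by (intro powr_mono2) auto
  also have "\<dots> = exp t * \<omega>"
    using k unfolding \<omega>_def k_def[symmetric] by (simp only: powr_mult exp_powr_real) simp
  finally show "integral {0..t} (\<lambda>s. ((t - s) powr (\<alpha> - 1) * exp s) powr (1 + \<alpha>)) powr (1 / (1 + \<alpha>))
                  \<le> exp t * \<omega>"
    unfolding k_def .
qed

text \<open>Hoelder's inequality with the conjugate exponents \<open>1 + \<alpha>\<close> and \<open>r\<close>, applied to the
  factorisation \<open>((t - s)\<^bsup>\<alpha> - 1\<^esup> e\<^sup>s) (e\<^sup>-\<^sup>s h s)\<close>: the \<open>(1 + \<alpha>)\<close>-th power of the first
  factor has the integrable singularity \<open>(t - s)\<^bsup>\<alpha>\<^sup>2 - 1\<^esup>\<close>.\<close>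
lemma kernel_integral_le_Holder:
  assumes t: "0 \<le> t" and h: "continuous_on {0..t} h" "\<And>s. s \<in> {0..t} \<Longrightarrow> 0 \<le> h s"
  shows "integral {0..t} (\<lambda>s. (t - s) powr (\<alpha> - 1) * h s)
           \<le> exp t * \<omega> * integral {0..t} (\<lambda>s. exp (- r * s) * h s powr r) powr (1 / r)"
proof -
  define f g where "f = (\<lambda>s. (t - s) powr (\<alpha> - 1) * exp s)" and "g = (\<lambda>s. exp (- s) * h s)"
  have fg: "f s * g s = (t - s) powr (\<alpha> - 1) * h s" for s
    unfolding f_def g_def by (simp add: field_simps flip: exp_add)
  have gr: "g s powr r = exp (- r * s) * h s powr r" if "s \<in> {0..t}" for s
    unfolding g_def using h(2)[OF that] by (simp add: powr_mult exp_powr_real mult.commute)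
  have "1 / (1 + \<alpha>) + 1 / r = 1"
    using alpha_pos by (simp add: r_def field_simps)
  moreover have "(\<lambda>s. g s powr r) integrable_on {0..t}"
    using integrable_exp_times_powr_r[OF h] by (rule integrable_spike_finite[of "{}", rotated 2]) (auto simp: gr)
  moreover have "(\<lambda>s. f s * g s) integrable_on {0..t}"
    unfolding fg using alpha_pos t h(1) by (intro powr_kernel_integrable) auto
  ultimately have "integral {0..t} (\<lambda>s. f s * g s)
      \<le> integral {0..t} (\<lambda>s. f s powr (1 + \<alpha>)) powr (1 / (1 + \<alpha>)) * integral {0..t} (\<lambda>s. g s powr r) powr (1 / r)"
    using alpha_pos r_gt_one kernel_factor_powr_integral_le(1)[OF t] h(2) unfolding f_def g_def
    by (intro Holder_inequality_integral) auto
  also have "\<dots> \<le> exp t * \<omega> * integral {0..t} (\<lambda>s. g s powr r) powr (1 / r)"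
    using kernel_factor_powr_integral_le(2)[OF t] unfolding f_def by (rule mult_right_mono) simp
  also have "integral {0..t} (\<lambda>s. g s powr r) = integral {0..t} (\<lambda>s. exp (- r * s) * h s powr r)"
    by (rule integral_cong) (simp add: gr)
  finally show ?thesis
    by (simp add: fg)
qed

end

section \<open>A delayed fractional Gronwall inequality\<close>

locale delay_gronwall = fractional_order +
  fixes \<tau> K a b c :: real
  assumes tau_pos: "0 < \<tau>" and K_pos: "0 < K" and a_pos: "0 < a" and b_pos: "0 < b"
    and c_pos: "0 < c"
begin

definition \<psi> :: real where
  "\<psi> = 3 powr (1 / \<alpha>) * (a powr r + b powr r * exp (- r * \<tau>)) * (K * \<omega>) powr r"

definition \<phi>' :: real where
  "\<phi>' = 3 powr (1 / \<alpha>) * b powr r * (1 - exp (- r * \<tau>)) / r * (K * \<omega>) powr r"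

definition Q :: "real \<Rightarrow> real" where
  "Q t = (3 powr (1 / \<alpha>) * r + (3 powr (1 / \<alpha>) * \<psi> + r * \<phi>' + \<psi> * \<phi>') * exp ((\<psi> + r) * t))
           / (r + \<psi>)"

definition V :: "real \<Rightarrow> real" where
  "V t = c * Q t powr (1 / r)"

definition E :: "real \<Rightarrow> real" where
  "E t = integral {0..t} (\<lambda>s. exp (- r * s) * V s powr r)"

text \<open>A bound for \<open>\<integral>\<^sub>0\<^sup>t e\<^bsup>-r s\<^esup> w(s - \<tau>)\<^sup>r ds\<close>: the part of the delay interval that
  reaches back into \<open>[-\<tau>, 0]\<close> contributes at most the first summand.\<close>
definition E_delayed :: "real \<Rightarrow> real" where
  "E_delayed t = c powr r * (1 - exp (- r * \<tau>)) / r + exp (- r * \<tau>) * E t"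

lemma \<psi>_pos: "\<psi> > 0"
  unfolding \<psi>_def using a_pos b_pos K_pos \<omega>_pos by (intro mult_pos_pos add_pos_nonneg) auto

lemma \<phi>'_nonneg: "\<phi>' \<ge> 0"
  unfolding \<phi>'_def using r_gt_one tau_pos by simp

lemma Q_pos: "Q t > 0"
  unfolding Q_def using \<psi>_pos \<phi>'_nonneg r_gt_one
  by (intro divide_pos_pos add_pos_nonneg mult_nonneg_nonneg) auto

lemma continuous_on_V: "continuous_on S V"
proof -
  have "continuous_on S Q"
    unfolding Q_def using \<psi>_pos r_gt_one by (intro continuous_intros) auto
  then show ?thesis
    unfolding V_def using Q_pos by (intro continuous_intros) (auto simp: less_imp_neq[symmetric])
qed

lemma V_powr_r: "V t powr r = c powr r * Q t"
  unfolding V_def using Q_pos[of t] c_pos r_gt_one by (simp add: powr_mult powr_powr)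

lemma c_less_V0: "c < V 0"
proof -
  have "Q 0 = 3 powr (1 / \<alpha>) + \<phi>'"
    unfolding Q_def using \<psi>_pos r_gt_one by (simp add: field_simps)
  also have "\<dots> > 1"
  proof -
    have "1 < 3 powr (1 / \<alpha>)"
      using alpha_pos by (intro gr_one_powr) auto
    then show ?thesis
      using \<phi>'_nonneg by linarith
  qed
  finally show ?thesis
    unfolding V_def using c_pos r_gt_one by simp
qed

lemma exp_neg_r_times_V_powr_r:
  "exp (- r * s) * V s powr r
     = c powr r / (r + \<psi>) * (3 powr (1 / \<alpha>) * r * exp (- r * s)
                               + (3 powr (1 / \<alpha>) * \<psi> + r * \<phi>' + \<psi> * \<phi>') * exp (\<psi> * s))"
proof -
  have "exp (- r * s) * exp ((\<psi> + r) * s) = exp (\<psi> * s)"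
    by (simp add: mult_exp_exp algebra_simps)
  then show ?thesis
    unfolding V_powr_r Q_def by (simp add: field_simps)
qed

lemma E_eq:
  assumes "0 \<le> t"
  shows "E t = c powr r / (r + \<psi>) * (3 powr (1 / \<alpha>) * (1 - exp (- r * t))
                 + (3 powr (1 / \<alpha>) * \<psi> + r * \<phi>' + \<psi> * \<phi>') * (exp (\<psi> * t) - 1) / \<psi>)"
proof -
  have "((\<lambda>s. exp (- r * s) * V s powr r) has_integral
          c powr r / (r + \<psi>) * (3 powr (1 / \<alpha>) * r * ((exp (- r * t) - exp (- r * 0)) / - r)
            + (3 powr (1 / \<alpha>) * \<psi> + r * \<phi>' + \<psi> * \<phi>') * ((exp (\<psi> * t) - exp (\<psi> * 0)) / \<psi>))) {0..t}"
    unfolding exp_neg_r_times_V_powr_r using assms r_gt_one \<psi>_pos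
    by (intro has_integral_mult_right has_integral_add has_integral_exp_mult) auto
  then have "E t = c powr r / (r + \<psi>) * (3 powr (1 / \<alpha>) * r * ((exp (- r * t) - exp (- r * 0)) / - r)
            + (3 powr (1 / \<alpha>) * \<psi> + r * \<phi>' + \<psi> * \<phi>') * ((exp (\<psi> * t) - exp (\<psi> * 0)) / \<psi>))"
    unfolding E_def by (rule integral_unique)
  also have "\<dots> = c powr r / (r + \<psi>) * (3 powr (1 / \<alpha>) * (1 - exp (- r * t))
                 + (3 powr (1 / \<alpha>) * \<psi> + r * \<phi>' + \<psi> * \<phi>') * (exp (\<psi> * t) - 1) / \<psi>)"
    using r_gt_one by (simp add: divide_simps) (simp add: algebra_simps)
  finally show ?thesis .
qed

lemma E_strict_mono:
  assumes "0 \<le> s" "s < t"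
  shows "E s < E t"
proof -
  have "exp (- r * t) < exp (- r * s)"
    using assms r_gt_one by simp
  then have "3 powr (1 / \<alpha>) * (1 - exp (- r * s)) < 3 powr (1 / \<alpha>) * (1 - exp (- r * t))"
    by (intro mult_strict_left_mono) auto
  moreover have "exp (\<psi> * s) - 1 \<le> exp (\<psi> * t) - 1"
    using assms \<psi>_pos by simp
  then have "(3 powr (1 / \<alpha>) * \<psi> + r * \<phi>' + \<psi> * \<phi>') * (exp (\<psi> * s) - 1) / \<psi>
               \<le> (3 powr (1 / \<alpha>) * \<psi> + r * \<phi>' + \<psi> * \<phi>') * (exp (\<psi> * t) - 1) / \<psi>"
    using r_gt_one \<psi>_pos \<phi>'_nonneg by (intro divide_right_mono mult_left_mono) auto
  ultimately have "3 powr (1 / \<alpha>) * (1 - exp (- r * s))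
                     + (3 powr (1 / \<alpha>) * \<psi> + r * \<phi>' + \<psi> * \<phi>') * (exp (\<psi> * s) - 1) / \<psi>
                   < 3 powr (1 / \<alpha>) * (1 - exp (- r * t))
                     + (3 powr (1 / \<alpha>) * \<psi> + r * \<phi>' + \<psi> * \<phi>') * (exp (\<psi> * t) - 1) / \<psi>"
    by (rule add_less_le_mono)
  moreover have "c powr r / (r + \<psi>) > 0"
    using c_pos r_gt_one \<psi>_pos by simp
  ultimately show ?thesis
    using assms E_eq[of s] E_eq[of t] by (simp only: mult_strict_left_mono)
qed

lemma has_integral_exp_neg_r_times_V_shift:
  assumes "\<tau> \<le> t"
  shows "((\<lambda>s. exp (- r * s) * V (s - \<tau>) powr r) has_integral exp (- r * \<tau>) * E (t - \<tau>)) {\<tau>..t}"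
proof -
  have "((\<lambda>s. exp (- r * s) * V s powr r) has_integral E (t - \<tau>)) {0..t - \<tau>}"
    unfolding E_def exp_neg_r_times_V_powr_r
    by (intro integrable_integral integrable_continuous_interval continuous_intros)
  from has_integral_mult_right[OF this, of "exp (- r * \<tau>)"]
  have "((\<lambda>s. exp (- r * (\<tau> + s)) * V (\<tau> + s - \<tau>) powr r) has_integral exp (- r * \<tau>) * E (t - \<tau>)) {0..t - \<tau>}"
    unfolding mult.assoc[symmetric] mult_exp_exp by (simp add: algebra_simps)
  then show ?thesis
    using has_integral_shift_Icc_real[of "\<lambda>s. exp (- r * s) * V (s - \<tau>) powr r" \<tau> _ 0 "t - \<tau>"]
    by (simp add: o_def)
qed

lemma E_0 [simp]: "E 0 = 0"
  by (simp add: E_def)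

lemma E_pos: "0 < t \<Longrightarrow> 0 < E t"
  using E_strict_mono[of 0 t] by simp

lemma E_delayed_pos: "0 \<le> t \<Longrightarrow> 0 < E_delayed t"
  unfolding E_delayed_def using c_pos r_gt_one tau_pos E_strict_mono[of 0 t]
  by (cases "t = 0") (auto intro!: add_pos_nonneg)

text \<open>\<open>V\<^sup>r\<close> solves with equality the linear integral equation to which Hoelder's inequality and
  the power mean inequality reduce the integral inequality for \<open>w\<^sup>r\<close>; this fixes \<open>\<psi>\<close> and \<open>\<phi>'\<close>.\<close>
lemma V_powr_r_integral_equation:
  assumes "0 \<le> t"
  shows "V t powr r = 3 powr (1 / \<alpha>) * (c powr r + (K * \<omega> * exp t * a) powr r * E t
                                             + (K * \<omega> * exp t * b) powr r * E_delayed t)"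
proof -
  have scale: "(K * \<omega> * exp t * x) powr r = (K * \<omega>) powr r * exp (r * t) * x powr r" if "0 \<le> x" for x
    using K_pos \<omega>_pos that by (simp add: powr_mult exp_powr_real mult.commute)
  define u v P where "u = exp (r * t)" and "v = exp (\<psi> * t)"
    and "P = 3 powr (1 / \<alpha>) * \<psi> + r * \<phi>' + \<psi> * \<phi>'"
  have "r + \<psi> > 0" "u > 0"
    using r_gt_one \<psi>_pos by (simp_all add: u_def)
  have exp_u: "exp (- r * t) = 1 / u"
    by (simp add: u_def exp_minus field_simps)
  have "u * (\<psi> * (3 powr (1 / \<alpha>) * (1 - 1 / u) + P * (v - 1) / \<psi>))
          = 3 powr (1 / \<alpha>) * \<psi> * (u - 1) + P * (v * u - u)"
    using \<open>u > 0\<close> \<psi>_pos by (simp add: field_simps)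
  then have uE: "u * (\<psi> * E t) = c powr r / (r + \<psi>) * (3 powr (1 / \<alpha>) * \<psi> * (u - 1) + P * (v * u - u))"
    unfolding E_eq[OF assms] P_def[symmetric] v_def[symmetric] exp_u by (simp add: ac_simps)
  have Q_eq: "Q t = (3 powr (1 / \<alpha>) * r + P * (v * u)) / (r + \<psi>)"
    unfolding Q_def P_def u_def v_def by (simp add: distrib_right exp_add)
  have "3 powr (1 / \<alpha>) * (c powr r + (K * \<omega> * exp t * a) powr r * E t
                              + (K * \<omega> * exp t * b) powr r * E_delayed t)
        = 3 powr (1 / \<alpha>) * c powr r + u * (\<psi> * E t) + u * \<phi>' * c powr r"
    unfolding scale[OF less_imp_le[OF a_pos]] scale[OF less_imp_le[OF b_pos]] \<psi>_def \<phi>'_def u_def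
      E_delayed_def
    using r_gt_one by (simp add: field_simps)
  also have "\<dots> = c powr r * Q t"
    unfolding uE Q_eq using \<open>r + \<psi> > 0\<close>
    by (simp add: field_simps P_def)
  finally show ?thesis
    by (simp add: V_powr_r)
qed

lemma initial_delayed_moment_le:
  assumes m: "0 \<le> m" "m \<le> \<tau>"
    and w: "continuous_on {-\<tau>..0} w" "\<And>s. s \<in> {-\<tau>..0} \<Longrightarrow> 0 \<le> w s" "\<And>s. s \<in> {-\<tau>..0} \<Longrightarrow> w s \<le> c"
  shows "integral {0..m} (\<lambda>s. exp (- r * s) * w (s - \<tau>) powr r) \<le> c powr r * (1 - exp (- r * \<tau>)) / r"
proof -
  have "(\<lambda>s. exp (- r * s) * w (s - \<tau>) powr r) integrable_on {0..m}"
    using m w by (intro integrable_exp_times_powr_r continuous_on_compose2[OF w(1)] continuous_intros) auto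
  moreover have "((\<lambda>s. c powr r * exp (- r * s))
                    has_integral c powr r * ((exp (- r * m) - exp (- r * 0)) / - r)) {0..m}"
    using m r_gt_one by (intro has_integral_mult_right has_integral_exp_mult) auto
  moreover have "w (s - \<tau>) powr r \<le> c powr r" if "s \<in> {0..m}" for s
    using that m r_gt_one w(2,3)[of "s - \<tau>"] by (intro powr_mono2) auto
  ultimately have "integral {0..m} (\<lambda>s. exp (- r * s) * w (s - \<tau>) powr r)
                     \<le> c powr r * ((exp (- r * m) - exp (- r * 0)) / - r)"
    by (intro has_integral_le[OF integrable_integral]) (auto simp: mult.commute)
  also have "\<dots> = c powr r * (1 - exp (- r * m)) / r"
    using r_gt_one by (simp add: field_simps)
  also have "\<dots> \<le> c powr r * (1 - exp (- r * \<tau>)) / r"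
    using m r_gt_one c_pos by (intro divide_right_mono mult_left_mono) auto
  finally show ?thesis .
qed

lemma shifted_delayed_moment_le:
  assumes t: "\<tau> \<le> t"
    and w: "continuous_on {0..t - \<tau>} w" "\<And>s. s \<in> {0..t - \<tau>} \<Longrightarrow> 0 \<le> w s"
      "\<And>s. s \<in> {0..t - \<tau>} \<Longrightarrow> w s \<le> V s"
  shows "integral {\<tau>..t} (\<lambda>s. exp (- r * s) * w (s - \<tau>) powr r) \<le> exp (- r * \<tau>) * E (t - \<tau>)"
proof (rule has_integral_le[OF integrable_integral has_integral_exp_neg_r_times_V_shift[OF t]])
  show "(\<lambda>s. exp (- r * s) * w (s - \<tau>) powr r) integrable_on {\<tau>..t}"
    using w by (intro integrable_exp_times_powr_r continuous_on_compose2[OF w(1)] continuous_intros) auto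
next
  fix s assume "s \<in> {\<tau>..t}"
  then have "w (s - \<tau>) powr r \<le> V (s - \<tau>) powr r"
    using r_gt_one w(2,3)[of "s - \<tau>"] by (intro powr_mono2) auto
  then show "exp (- r * s) * w (s - \<tau>) powr r \<le> exp (- r * s) * V (s - \<tau>) powr r"
    by simp
qed

lemma delayed_moment_less:
  assumes t: "0 < t"
    and w_cont: "continuous_on {-\<tau>..t} w" and w_nonneg: "\<And>s. s \<in> {-\<tau>..t} \<Longrightarrow> 0 \<le> w s"
    and w_init: "\<And>s. s \<in> {-\<tau>..0} \<Longrightarrow> w s \<le> c"
    and below: "\<And>s. s \<in> {0..<t} \<Longrightarrow> w s < V s"
  shows "integral {0..t} (\<lambda>s. exp (- r * s) * w (s - \<tau>) powr r) < E_delayed t"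
proof -
  have initial: "integral {0..m} (\<lambda>s. exp (- r * s) * w (s - \<tau>) powr r) \<le> c powr r * (1 - exp (- r * \<tau>)) / r"
    if "0 \<le> m" "m \<le> \<tau>" for m
    using that t w_nonneg w_init tau_pos
    by (intro initial_delayed_moment_le continuous_on_subset[OF w_cont]) auto
  show ?thesis
  proof (cases "t \<le> \<tau>")
    case True
    have "0 < exp (- r * \<tau>) * E t"
      using E_pos[OF t] by simp
    then show ?thesis
      using initial[of t] t True unfolding E_delayed_def by linarith
  next
    case False
    have "integral {0..t} (\<lambda>s. exp (- r * s) * w (s - \<tau>) powr r)
            = integral {0..\<tau>} (\<lambda>s. exp (- r * s) * w (s - \<tau>) powr r)
              + integral {\<tau>..t} (\<lambda>s. exp (- r * s) * w (s - \<tau>) powr r)"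
      using False tau_pos w_cont w_nonneg
      by (intro Henstock_Kurzweil_Integration.integral_combine[symmetric] integrable_exp_times_powr_r
          continuous_on_compose2[OF w_cont] continuous_intros) auto
    also have "\<dots> \<le> c powr r * (1 - exp (- r * \<tau>)) / r + exp (- r * \<tau>) * E (t - \<tau>)"
      using initial[of \<tau>] tau_pos False w_nonneg below[THEN less_imp_le]
      by (intro add_mono shifted_delayed_moment_le continuous_on_subset[OF w_cont]) auto
    also have "\<dots> < E_delayed t"
      unfolding E_delayed_def using False tau_pos E_strict_mono[of "t - \<tau>" t] by simp
    finally show ?thesis .
  qed
qed

lemma kernel_integral_le_E:
  assumes t: "0 \<le> t" and w_cont: "continuous_on {0..t} w" and below: "\<And>s. s \<in> {0..<t} \<Longrightarrow> w s \<le> V s"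
  shows "integral {0..t} (\<lambda>s. (t - s) powr (\<alpha> - 1) * w s) \<le> exp t * \<omega> * E t powr (1 / r)"
proof -
  have "integral {0..t} (\<lambda>s. (t - s) powr (\<alpha> - 1) * w s) \<le> integral {0..t} (\<lambda>s. (t - s) powr (\<alpha> - 1) * V s)"
  proof (rule integral_le)
    show "(\<lambda>s. (t - s) powr (\<alpha> - 1) * w s) integrable_on {0..t}"
      and "(\<lambda>s. (t - s) powr (\<alpha> - 1) * V s) integrable_on {0..t}"
      using alpha_pos t w_cont continuous_on_V by (auto intro!: powr_kernel_integrable)
  next
    fix s assume "s \<in> {0..t}"
    then consider "s \<in> {0..<t}" | "s = t"
      by fastforce
    then show "(t - s) powr (\<alpha> - 1) * w s \<le> (t - s) powr (\<alpha> - 1) * V s"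
      by cases (auto intro!: mult_left_mono below)
  qed
  also have "\<dots> \<le> exp t * \<omega> * E t powr (1 / r)"
    unfolding E_def using t c_pos by (intro kernel_integral_le_Holder continuous_on_V) (auto simp: V_def)
  finally show ?thesis .
qed

lemma kernel_integral_delayed_less:
  assumes t: "0 < t"
    and w_cont: "continuous_on {-\<tau>..t} w" and w_nonneg: "\<And>s. s \<in> {-\<tau>..t} \<Longrightarrow> 0 \<le> w s"
    and w_init: "\<And>s. s \<in> {-\<tau>..0} \<Longrightarrow> w s \<le> c"
    and below: "\<And>s. s \<in> {0..<t} \<Longrightarrow> w s < V s"
  shows "integral {0..t} (\<lambda>s. (t - s) powr (\<alpha> - 1) * w (s - \<tau>)) < exp t * \<omega> * E_delayed t powr (1 / r)"
proof -
  define J where "J = integral {0..t} (\<lambda>s. exp (- r * s) * w (s - \<tau>) powr r)"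
  have w_delay: "continuous_on {0..t} (\<lambda>s. w (s - \<tau>))" "\<And>s. s \<in> {0..t} \<Longrightarrow> 0 \<le> w (s - \<tau>)"
    using tau_pos w_nonneg by (auto intro!: continuous_on_compose2[OF w_cont] continuous_intros)
  have "integral {0..t} (\<lambda>s. (t - s) powr (\<alpha> - 1) * w (s - \<tau>)) \<le> exp t * \<omega> * J powr (1 / r)"
    unfolding J_def using t w_delay by (intro kernel_integral_le_Holder) auto
  also have "\<dots> < exp t * \<omega> * E_delayed t powr (1 / r)"
  proof -
    have "0 \<le> J"
      unfolding J_def using w_delay by (intro integral_nonneg integrable_exp_times_powr_r) auto
    moreover have "J < E_delayed t"
      unfolding J_def using t w_cont w_nonneg w_init below by (rule delayed_moment_less)
    ultimately show ?thesis
      using \<omega>_pos r_gt_one by (simp add: powr_less_mono2)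
  qed
  finally show ?thesis .
qed

lemma sum_le_V:
  assumes t: "0 < t"
  shows "c + K * (a * (exp t * \<omega> * E t powr (1 / r)) + b * (exp t * \<omega> * E_delayed t powr (1 / r))) \<le> V t"
proof (rule ccontr)
  define Y Z where "Y = K * \<omega> * exp t * a * E t powr (1 / r)" and "Z = K * \<omega> * exp t * b * E_delayed t powr (1 / r)"
  have pos: "0 < Y" "0 < Z" "0 < E t" "0 < E_delayed t"
    unfolding Y_def Z_def using K_pos \<omega>_pos a_pos b_pos E_pos[OF t] E_delayed_pos[of t] t by auto
  assume "\<not> c + K * (a * (exp t * \<omega> * E t powr (1 / r)) + b * (exp t * \<omega> * E_delayed t powr (1 / r))) \<le> V t"
  then have "V t powr r < (c + Y + Z) powr r"
    unfolding Y_def Z_def using r_gt_one c_pos by (intro powr_less_mono2) (auto simp: V_def algebra_simps)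
  also have "\<dots> \<le> 3 powr (r - 1) * (c powr r + Y powr r + Z powr r)"
    using pos c_pos r_gt_one by (intro powr_add3_le) auto
  also have "3 powr (r - 1) = 3 powr (1 / \<alpha>)"
    by (simp add: r_def)
  also have "3 powr (1 / \<alpha>) * (c powr r + Y powr r + Z powr r) = V t powr r"
    unfolding V_powr_r_integral_equation[OF less_imp_le[OF t]] Y_def Z_def
    using r_gt_one pos K_pos \<omega>_pos a_pos b_pos by (simp add: powr_mult powr_powr)
  finally show False
    by simp
qed

lemma less_V_step:
  assumes t: "0 < t"
    and w_cont: "continuous_on {-\<tau>..t} w" and w_nonneg: "\<And>s. s \<in> {-\<tau>..t} \<Longrightarrow> 0 \<le> w s"
    and w_init: "\<And>s. s \<in> {-\<tau>..0} \<Longrightarrow> w s \<le> c"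
    and w_le: "w t \<le> c + K * integral {0..t} (\<lambda>s. (t - s) powr (\<alpha> - 1) * (a * w s + b * w (s - \<tau>)))"
    and below: "\<And>s. s \<in> {0..<t} \<Longrightarrow> w s < V s"
  shows "w t < V t"
proof -
  have w_cont': "continuous_on {0..t} w" "continuous_on {0..t} (\<lambda>s. w (s - \<tau>))"
    using tau_pos by (auto intro!: continuous_on_subset[OF w_cont] continuous_on_compose2[OF w_cont]
        continuous_intros)
  have "integral {0..t} (\<lambda>s. (t - s) powr (\<alpha> - 1) * (a * w s + b * w (s - \<tau>)))
          = a * integral {0..t} (\<lambda>s. (t - s) powr (\<alpha> - 1) * w s)
            + b * integral {0..t} (\<lambda>s. (t - s) powr (\<alpha> - 1) * w (s - \<tau>))"
    using powr_kernel_integrable[of "\<alpha> - 1" t, OF _ _ w_cont'(1)]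
      powr_kernel_integrable[of "\<alpha> - 1" t, OF _ _ w_cont'(2)] alpha_pos t
    by (simp add: algebra_simps integral_add integrable_on_mult_right)
  also have "\<dots> < a * (exp t * \<omega> * E t powr (1 / r)) + b * (exp t * \<omega> * E_delayed t powr (1 / r))"
  proof (intro add_le_less_mono mult_left_mono mult_strict_left_mono)
    show "integral {0..t} (\<lambda>s. (t - s) powr (\<alpha> - 1) * w s) \<le> exp t * \<omega> * E t powr (1 / r)"
      using less_imp_le[OF t] w_cont'(1) below[THEN less_imp_le] by (rule kernel_integral_le_E)
    show "integral {0..t} (\<lambda>s. (t - s) powr (\<alpha> - 1) * w (s - \<tau>)) < exp t * \<omega> * E_delayed t powr (1 / r)"
      using t w_cont w_nonneg w_init below by (rule kernel_integral_delayed_less)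
  qed (use a_pos b_pos in auto)
  finally have "w t < c + K * (a * (exp t * \<omega> * E t powr (1 / r)) + b * (exp t * \<omega> * E_delayed t powr (1 / r)))"
    using w_le K_pos by (simp add: order.strict_trans1)
  also have "\<dots> \<le> V t"
    using t by (rule sum_le_V)
  finally show ?thesis .
qed

theorem less_V:
  assumes w_cont: "continuous_on {-\<tau>..T} w" and w_nonneg: "\<And>s. s \<in> {-\<tau>..T} \<Longrightarrow> 0 \<le> w s"
    and w_init: "\<And>s. s \<in> {-\<tau>..0} \<Longrightarrow> w s \<le> c"
    and w_le: "\<And>t. t \<in> {0..T} \<Longrightarrow>
                 w t \<le> c + K * integral {0..t} (\<lambda>s. (t - s) powr (\<alpha> - 1) * (a * w s + b * w (s - \<tau>)))"
    and t: "t \<in> {0..T}"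
  shows "w t < V t"
proof (rule less_by_first_crossing[OF _ continuous_on_V _ t])
  show "continuous_on {0..T} w"
    using tau_pos by (intro continuous_on_subset[OF w_cont]) auto
next
  fix t assume t: "t \<in> {0..T}" and below: "\<And>s. s \<in> {0..<t} \<Longrightarrow> w s < V s"
  show "w t < V t"
  proof (cases "t = 0")
    case True
    then show ?thesis
      using w_init[of 0] tau_pos c_less_V0 by simp
  next
    case False
    show ?thesis
    proof (rule less_V_step)
      show "continuous_on {-\<tau>..t} w"
        using t by (intro continuous_on_subset[OF w_cont]) auto
    qed (use False t w_nonneg w_init w_le below in auto)
  qed
qed

end

section \<open>Mild solutions\<close>

lemma spec_norm_nonneg: "0 \<le> spec_norm M"
  unfolding spec_norm_def by (intro onorm_pos_le) simp

lemma norm_matrix_vector_mult_le: "norm (M *v x) \<le> spec_norm M * norm x"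
  unfolding spec_norm_def by (intro onorm) simp

lemma norm_le_normC:
  assumes "continuous_on {-\<tau>..0} \<phi>" "t \<in> {-\<tau>..0}"
  shows "norm (\<phi> t) \<le> normC \<tau> \<phi>"
proof -
  have "bounded ((\<lambda>t. norm (\<phi> t)) ` {-\<tau>..0})"
    using assms(1) by (intro compact_imp_bounded compact_continuous_image continuous_intros) auto
  then show ?thesis
    unfolding normC_def using assms(2) by (intro cSUP_upper bounded_imp_bdd_above)
qed

lemma norm_gpf_integral_le:
  fixes h :: "real \<Rightarrow> real^'n"
  assumes "0 < \<alpha>" "0 < \<mu>" "\<mu> \<le> 1" "0 \<le> t"
    and bound: "\<And>s. s \<in> {0..t} \<Longrightarrow> norm (h s) \<le> g s"
    and g_int: "(\<lambda>s. (t - s) powr (\<alpha> - 1) * g s) integrable_on {0..t}"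
  shows "norm (gpf_integral \<alpha> \<mu> (\<lambda>s. exp ((\<mu> - 1) / \<mu> * s) *\<^sub>R h s) t)
           \<le> 1 / (\<mu> powr \<alpha> * Gamma \<alpha>) * integral {0..t} (\<lambda>s. (t - s) powr (\<alpha> - 1) * g s)"
proof -
  define F where "F = (\<lambda>s. (exp ((\<mu> - 1) / \<mu> * (t - s)) * (t - s) powr (\<alpha> - 1)) *\<^sub>R
                             (exp ((\<mu> - 1) / \<mu> * s) *\<^sub>R h s))"
  have "exp ((\<mu> - 1) / \<mu> * t) \<le> 1"
    using assms(2-4) by (simp add: mult_nonpos_nonneg divide_nonpos_pos)
  then have F_bound: "norm (F s) \<le> (t - s) powr (\<alpha> - 1) * g s" if "s \<in> {0..t}" for s
  proof -
    have "norm (F s) = exp ((\<mu> - 1) / \<mu> * t) * ((t - s) powr (\<alpha> - 1) * norm (h s))"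
      unfolding F_def by (simp add: ring_distribs flip: exp_add mult.assoc)
    also have "\<dots> \<le> 1 * ((t - s) powr (\<alpha> - 1) * g s)"
      using \<open>exp ((\<mu> - 1) / \<mu> * t) \<le> 1\<close> bound[OF that]
      by (intro mult_mono mult_left_mono) auto
    finally show ?thesis
      by simp
  qed
  have "norm (integral {0..t} F) \<le> integral {0..t} (\<lambda>s. (t - s) powr (\<alpha> - 1) * g s)"
  proof (cases "F integrable_on {0..t}")
    case True
    then show ?thesis
      using g_int F_bound by (rule integral_norm_bound_integral)
  next
    case False
    have "0 \<le> integral {0..t} (\<lambda>s. (t - s) powr (\<alpha> - 1) * g s)"
      using g_int F_bound by (intro integral_nonneg) (auto intro: order_trans[OF norm_ge_zero])
    then show ?thesis
      using False by (simp add: not_integrable_integral)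
  qed
  moreover have "0 < \<mu> powr \<alpha> * Gamma \<alpha>"
    using assms(1,2) by simp
  ultimately show ?thesis
    unfolding gpf_integral_def F_def[symmetric] by (simp add: divide_right_mono)
qed

lemma mild_solution_norm_le:
  fixes A B :: "real^'n^'n" and y :: "real \<Rightarrow> real^'n"
  assumes "0 < \<alpha>" "0 < \<mu>" "\<mu> \<le> 1" "0 < \<tau>"
    and sol: "mild_solution \<alpha> \<mu> T \<tau> A B f \<phi> y"
    and init: "\<And>s. s \<in> {-\<tau>..0} \<Longrightarrow> norm (\<phi> s) \<le> c"
    and growth: "\<And>s. s \<in> {0..T} \<Longrightarrow> norm (f s (y s) (y (s - \<tau>))) \<le> L * (norm (y s) + norm (y (s - \<tau>)))"
    and t: "t \<in> {0..T}"
  shows "norm (y t) \<le> c + 1 / (\<mu> powr \<alpha> * Gamma \<alpha>) * integral {0..t} (\<lambda>s. (t - s) powr (\<alpha> - 1)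
                             * ((spec_norm A + L) * norm (y s) + (spec_norm B + L) * norm (y (s - \<tau>))))"
proof -
  have y_cont: "continuous_on {-\<tau>..T} y"
    and y_eq: "y t = exp ((\<mu> - 1) / \<mu> * t) *\<^sub>R \<phi> 0 + gpf_integral \<alpha> \<mu>
                 (\<lambda>s. exp ((\<mu> - 1) / \<mu> * s) *\<^sub>R (A *v y s + B *v y (s - \<tau>) + f s (y s) (y (s - \<tau>)))) t"
    using sol t unfolding mild_solution_def by auto
  have "exp ((\<mu> - 1) / \<mu> * t) \<le> 1"
    using assms(2,3) t by (simp add: mult_nonpos_nonneg divide_nonpos_pos)
  then have initial: "norm (exp ((\<mu> - 1) / \<mu> * t) *\<^sub>R \<phi> 0) \<le> 1 * c"
    using init[of 0] assms(4) unfolding norm_scaleR abs_exp_cancel by (intro mult_mono) auto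
  have rhs_bound: "norm (A *v y s + B *v y (s - \<tau>) + f s (y s) (y (s - \<tau>)))
                   \<le> (spec_norm A + L) * norm (y s) + (spec_norm B + L) * norm (y (s - \<tau>))"
    if "s \<in> {0..t}" for s
    using norm_triangle_ineq[of "A *v y s + B *v y (s - \<tau>)" "f s (y s) (y (s - \<tau>))"]
      norm_triangle_ineq[of "A *v y s" "B *v y (s - \<tau>)"] growth[of s] that t
      norm_matrix_vector_mult_le[of A "y s"] norm_matrix_vector_mult_le[of B "y (s - \<tau>)"]
    by (simp add: algebra_simps)
  have "continuous_on {0..t} (\<lambda>s. (spec_norm A + L) * norm (y s) + (spec_norm B + L) * norm (y (s - \<tau>)))"
    using t assms(4)
    by (intro continuous_intros continuous_on_subset[OF y_cont] continuous_on_compose2[OF y_cont]) auto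
  then have "(\<lambda>s. (t - s) powr (\<alpha> - 1) * ((spec_norm A + L) * norm (y s) + (spec_norm B + L) * norm (y (s - \<tau>))))
               integrable_on {0..t}"
    using assms(1) t by (intro powr_kernel_integrable) auto
  then have "norm (gpf_integral \<alpha> \<mu> (\<lambda>s. exp ((\<mu> - 1) / \<mu> * s) *\<^sub>R
                   (A *v y s + B *v y (s - \<tau>) + f s (y s) (y (s - \<tau>)))) t)
               \<le> 1 / (\<mu> powr \<alpha> * Gamma \<alpha>) * integral {0..t} (\<lambda>s. (t - s) powr (\<alpha> - 1)
                    * ((spec_norm A + L) * norm (y s) + (spec_norm B + L) * norm (y (s - \<tau>))))"
    using rhs_bound assms(1-3) t by (intro norm_gpf_integral_le) auto
  then show ?thesis
    unfolding y_eq using initial by (intro order_trans[OF norm_triangle_ineq add_mono]) simp_all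
qed

lemma (in fractional_order) gpf_constant_powr_r:
  assumes "0 < \<mu>"
  shows "(1 / (\<mu> powr \<alpha> * Gamma \<alpha>)) powr r = 1 / (\<mu> powr (1 + \<alpha>) * Gamma \<alpha> powr r)"
proof -
  have "\<alpha> * r = 1 + \<alpha>"
    using alpha_pos by (simp add: r_def field_simps)
  then have "(\<mu> powr \<alpha> * Gamma \<alpha>) powr r = \<mu> powr (1 + \<alpha>) * Gamma \<alpha> powr r"
    using assms alpha_pos by (simp add: powr_mult powr_powr)
  then show ?thesis
    using assms alpha_pos by (simp add: powr_divide)
qed

context delay_gronwall
begin

lemma \<psi>_\<phi>'_eq_gpf:
  assumes "0 < \<mu>" "K = 1 / (\<mu> powr \<alpha> * Gamma \<alpha>)"
  shows "\<psi> = 3 powr (1 / \<alpha>) * (a powr r + b powr r * exp (- r * \<tau>)) * \<omega> powr r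
               / (\<mu> powr (1 + \<alpha>) * Gamma \<alpha> powr r)"
    and "\<phi>' = 3 powr (1 / \<alpha>) * b powr r * (1 - exp (- r * \<tau>)) / (r * \<mu> powr (1 + \<alpha>) * Gamma \<alpha> powr r)
                * \<omega> powr r"
proof -
  have "K powr r = 1 / (\<mu> powr (1 + \<alpha>) * Gamma \<alpha> powr r)"
    unfolding assms(2) using assms(1) by (rule gpf_constant_powr_r)
  then show "\<psi> = 3 powr (1 / \<alpha>) * (a powr r + b powr r * exp (- r * \<tau>)) * \<omega> powr r
               / (\<mu> powr (1 + \<alpha>) * Gamma \<alpha> powr r)"
    and "\<phi>' = 3 powr (1 / \<alpha>) * b powr r * (1 - exp (- r * \<tau>)) / (r * \<mu> powr (1 + \<alpha>) * Gamma \<alpha> powr r)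
                * \<omega> powr r"
    unfolding \<psi>_def \<phi>'_def powr_mult[of K \<omega>] by simp_all
qed

lemma mild_solution_norm_less_V:
  fixes A B :: "real^'n^'n" and y :: "real \<Rightarrow> real^'n"
  assumes "0 < \<mu>" "\<mu> \<le> 1"
    and K: "K = 1 / (\<mu> powr \<alpha> * Gamma \<alpha>)" and a: "a = spec_norm A + L" and b: "b = spec_norm B + L"
    and sol: "mild_solution \<alpha> \<mu> T \<tau> A B f \<phi> y"
    and init: "\<And>s. s \<in> {-\<tau>..0} \<Longrightarrow> norm (\<phi> s) \<le> c"
    and growth: "\<And>s. s \<in> {0..T} \<Longrightarrow> norm (f s (y s) (y (s - \<tau>))) \<le> L * (norm (y s) + norm (y (s - \<tau>)))"
    and t: "t \<in> {0..T}"
  shows "norm (y t) < V t"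
proof (rule less_V[OF _ _ _ _ t])
  show "continuous_on {-\<tau>..T} (\<lambda>s. norm (y s))"
    using sol unfolding mild_solution_def by (intro continuous_intros) auto
  show "norm (y s) \<le> c" if "s \<in> {-\<tau>..0}" for s
    using sol init that unfolding mild_solution_def by auto
  show "norm (y s) \<le> c + K * integral {0..s} (\<lambda>u. (s - u) powr (\<alpha> - 1) * (a * norm (y u) + b * norm (y (u - \<tau>))))"
    if "s \<in> {0..T}" for s
    unfolding K a b using alpha_pos assms(1,2) tau_pos sol init growth that by (rule mild_solution_norm_le)
qed simp

end

theorem theorem2:
  fixes \<alpha> \<mu> T \<tau> Lf c1 c2 :: real
    and A B :: "real^'n^'n"
    and \<phi> :: "real \<Rightarrow> real^'n"
    and f :: "real \<Rightarrow> real^'n \<Rightarrow> real^'n \<Rightarrow> real^'n"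
    and y :: "real \<Rightarrow> real^'n"
  assumes alpha: "0 < \<alpha>" "\<alpha> < 1"
    and mu: "0 < \<mu>" "\<mu> \<le> 1"
    and T: "0 < T" and tau: "0 < \<tau>"
    and phi_cont: "continuous_on {-\<tau>..0} \<phi>"
    and f_cont: "continuous_on ({0..T} \<times> UNIV \<times> UNIV) (\<lambda>(t, u, v). f t u v)"
    and f_zero: "\<forall>t\<in>{0..T}. f t 0 0 = 0"
    and Lf: "0 < Lf"
    and Lip: "\<forall>(u::real \<Rightarrow> real^'n) (v::real \<Rightarrow> real^'n). \<forall>t\<in>{0..T}.
               norm (f t (u t) (u (t - \<tau>)) - f t (v t) (v (t - \<tau>)))
                 \<le> Lf * (norm (u t - v t) + norm (u (t - \<tau>) - v (t - \<tau>)))"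
    and c: "0 < c1" "c1 \<le> c2"
    and cond: "\<forall>t\<in>{0..T}.
       (let k = 1 + \<alpha>; r = 1 + 1 / \<alpha>;
            \<omega> = (Gamma (\<alpha>\<^sup>2) / k powr (\<alpha>\<^sup>2)) powr (1 / k);
            \<psi> = 3 powr (1 / \<alpha>) * ((spec_norm A + Lf) powr r + (spec_norm B + Lf) powr r * exp (- r * \<tau>))
                  * \<omega> powr r / (\<mu> powr k * Gamma \<alpha> powr r);
            \<phi>' = 3 powr (1 / \<alpha>) * (spec_norm B + Lf) powr r * (1 - exp (- r * \<tau>))
                  / (r * \<mu> powr k * Gamma \<alpha> powr r) * \<omega> powr r
        in ((3 powr (1 / \<alpha>) * r + (3 powr (1 / \<alpha>) * \<psi> + r * \<phi>' + \<psi> * \<phi>') * exp ((\<psi> + r) * t))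
              / (r + \<psi>)) powr (1 / r) \<le> c2 / c1)"
    and sol: "mild_solution \<alpha> \<mu> T \<tau> A B f \<phi> y"
    and init: "normC \<tau> \<phi> \<le> c1"
  shows "\<forall>t\<in>{0..T}. norm (y t) < c2"
proof
  fix t assume t: "t \<in> {0..T}"
  \<comment> \<open>\<open>f_cont\<close> and \<open>T\<close> only serve the existence of \<open>y\<close>, which \<open>sol\<close> provides.\<close>
  define K where "K = 1 / (\<mu> powr \<alpha> * Gamma \<alpha>)"
  interpret G: delay_gronwall \<alpha> \<tau> K "spec_norm A + Lf" "spec_norm B + Lf" c1
    using alpha tau mu Lf c spec_norm_nonneg[of A] spec_norm_nonneg[of B]
    by unfold_locales (auto simp: K_def)
  have "norm (y t) < G.V t"
  proof (rule G.mild_solution_norm_less_V[OF mu K_def refl refl sol _ _ t])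
    show "norm (\<phi> s) \<le> c1" if "s \<in> {-\<tau>..0}" for s
      using norm_le_normC[OF phi_cont that] init by linarith
    show "norm (f s (y s) (y (s - \<tau>))) \<le> Lf * (norm (y s) + norm (y (s - \<tau>)))" if "s \<in> {0..T}" for s
      using Lip[rule_format, where u = y and v = "\<lambda>_. 0" and t = s] f_zero that by simp
  qed
  also have "G.V t \<le> c2"
  proof -
    have "G.Q t powr (1 / G.r) \<le> c2 / c1"
      using cond t G.\<psi>_\<phi>'_eq_gpf[OF mu(1) K_def]
      unfolding Let_def G.\<omega>_def[symmetric] G.r_def[symmetric] G.Q_def by simp
    then show ?thesis
      unfolding G.V_def using c by (simp add: field_simps)
  qed
  finally show "norm (y t) < c2" .
qed

end
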